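(* Let $\Gamma=(N,A,u)$ be a finite normal form game and let $G\le S_\Gamma$ be player transitive. There exists a matching $M$ of $A_1,\dots,A_n$ such that $M_{\overrightarrow{G}}=G$ if and only if $G$ is strategy trivial.
   Context: $S_\Gamma$ is the group of game bijections $g=(\pi;(\tau_i)_{i\in N})$ from $\Gamma$ to itself ($\pi\in S_N$, bijections $\tau_i:A_i\to A_{\pi(i)}$), with composition $(\eta;(\phi_j))\circ(\pi;(\tau_i))=(\eta\circ\pi;(\phi_{\pi(i)}\circ\tau_i)_{i\in N})$; write $g(i)=\pi(i)$, $g(s_i)=\tau_i(s_i)$. $\overrightarrow{G}\le S_N$ is the set of player permutations of elements of $G$. $G$ is player transitive if $\overrightarrow{G}$ acts transitively on $N$. $G$ is strategy trivial if for each $i\in N$, $g(s_i)=s_i$ for all $g\in G$ with $g(i)=i$ and all $s_i\in A_i$. A matching of $A_1,\dots,A_n$ is $M\subseteq\times_{i\in N}A_i$ such that for each $i$ and $a_i\in A_i$ there is exactly one $s\in M$ with $s_i=a_i$; $M_{ij}:A_i\to A_j$ sends $a_i$ to the unique $a_j$ with some $s\in M$ having $s_i=a_i,s_j=a_j$; $M_\pi=(\pi;(M_{i\pi(i)})_{i\in N})$ and $M_H=\{M_\pi:\pi\in H\}$ for $H\subseteq S_N$. *)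

theory Defs
  imports Complex_Main "HOL-Algebra.Group"
begin

text \<open>Players form a finite type 'p (N = UNIV); A i :: 's set is the strategy set of player i.
A game bijection g = (pi, tau) is a player permutation pi together with bijections
tau i : A i -> A (pi i); tau i is normalised to be undefined outside A i so that
equality of game bijections is equality of the underlying data.\<close>

type_synonym ('p, 's) game_bij = "('p \<Rightarrow> 'p) \<times> ('p \<Rightarrow> 's \<Rightarrow> 's)"

definition game_bijections :: "('p \<Rightarrow> 's set) \<Rightarrow> ('p, 's) game_bij set" where
  "game_bijections A = {(\<pi>, \<tau>). bij \<pi> \<and> (\<forall>i. bij_betw (\<tau> i) (A i) (A (\<pi> i)))
       \<and> (\<forall>i s. s \<notin> A i \<longrightarrow> \<tau> i s = undefined)}"

definition gb_comp :: "('p \<Rightarrow> 's set) \<Rightarrow> ('p, 's) game_bij \<Rightarrow> ('p, 's) game_bij \<Rightarrow> ('p, 's) game_bij" where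
  "gb_comp A h g = (fst h \<circ> fst g,
      \<lambda>i s. if s \<in> A i then snd h (fst g i) (snd g i s) else undefined)"

definition gb_id :: "('p \<Rightarrow> 's set) \<Rightarrow> ('p, 's) game_bij" where
  "gb_id A = (id, \<lambda>i s. if s \<in> A i then s else undefined)"

definition S_Gamma :: "('p \<Rightarrow> 's set) \<Rightarrow> ('p, 's) game_bij monoid" where
  "S_Gamma A = \<lparr>carrier = game_bijections A, mult = gb_comp A, one = gb_id A\<rparr>"

definition player_perms :: "('p, 's) game_bij set \<Rightarrow> ('p \<Rightarrow> 'p) set" where
  "player_perms G = fst ` G"

definition player_transitive :: "('p, 's) game_bij set \<Rightarrow> bool" where
  "player_transitive G \<longleftrightarrow> (\<forall>i j. \<exists>\<pi>\<in>player_perms G. \<pi> i = j)"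

definition strategy_trivial :: "('p \<Rightarrow> 's set) \<Rightarrow> ('p, 's) game_bij set \<Rightarrow> bool" where
  "strategy_trivial A G \<longleftrightarrow> (\<forall>i. \<forall>g\<in>G. fst g i = i \<longrightarrow> (\<forall>s\<in>A i. snd g i s = s))"

definition matching :: "('p \<Rightarrow> 's set) \<Rightarrow> ('p \<Rightarrow> 's) set \<Rightarrow> bool" where
  "matching A M \<longleftrightarrow> M \<subseteq> {s. \<forall>i. s i \<in> A i}
      \<and> (\<forall>i. \<forall>a\<in>A i. \<exists>!s. s \<in> M \<and> s i = a)"

definition match_map :: "('p \<Rightarrow> 's set) \<Rightarrow> ('p \<Rightarrow> 's) set \<Rightarrow> 'p \<Rightarrow> 'p \<Rightarrow> 's \<Rightarrow> 's" where
  "match_map A M i j = (\<lambda>a. if a \<in> A i then (THE b. \<exists>s\<in>M. s i = a \<and> s j = b) else undefined)"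

definition match_bij :: "('p \<Rightarrow> 's set) \<Rightarrow> ('p \<Rightarrow> 's) set \<Rightarrow> ('p \<Rightarrow> 'p) \<Rightarrow> ('p, 's) game_bij" where
  "match_bij A M \<pi> = (\<pi>, \<lambda>i. match_map A M i (\<pi> i))"

definition match_set :: "('p \<Rightarrow> 's set) \<Rightarrow> ('p \<Rightarrow> 's) set \<Rightarrow> ('p \<Rightarrow> 'p) set \<Rightarrow> ('p, 's) game_bij set" where
  "match_set A M H = match_bij A M ` H"

end

theory Submission
  imports Defs
begin

text \<open>An element M_\<pi> of a matching group fixing player i acts on A_i by M_ii, the identity;
this gives strategy triviality. Conversely, fix a player i. If g(i) = h(i) then h\<inverse>g fixes i and
so, by strategy triviality, is the identity on A_i: all elements of G sending i to j induce one
bijection T_j : A_i \<rightarrow> A_j. The profiles (T_j a)_j, a \<in> A_i, form a matching M with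
M_jk = T_k \<circ> T_j\<inverse>, and composing g with some h sending i to j shows that g acts on A_j as
T_g(j) \<circ> T_j\<inverse>, i.e. g = M_\<pi> for its player permutation \<pi>.\<close>

lemma mem_game_bijections:
  "g \<in> game_bijections A \<longleftrightarrow> bij (fst g) \<and> (\<forall>i. bij_betw (snd g i) (A i) (A (fst g i)))
     \<and> (\<forall>i s. s \<notin> A i \<longrightarrow> snd g i s = undefined)"
  by (cases g) (simp add: game_bijections_def)

lemma game_bijections_bij_betw:
  "g \<in> game_bijections A \<Longrightarrow> bij_betw (snd g i) (A i) (A (fst g i))"
  by (simp add: mem_game_bijections)

lemma game_bijections_mem:
  "g \<in> game_bijections A \<Longrightarrow> s \<in> A i \<Longrightarrow> snd g i s \<in> A (fst g i)"
  by (meson bij_betwE game_bijections_bij_betw)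

lemma game_bijections_undefined:
  "g \<in> game_bijections A \<Longrightarrow> s \<notin> A i \<Longrightarrow> snd g i s = undefined"
  by (simp add: mem_game_bijections)

lemma fst_gb_comp [simp]: "fst (gb_comp A h g) = fst h \<circ> fst g"
  by (simp add: gb_comp_def)

lemma snd_gb_comp [simp]: "s \<in> A i \<Longrightarrow> snd (gb_comp A h g) i s = snd h (fst g i) (snd g i s)"
  by (simp add: gb_comp_def)

lemma fst_gb_id [simp]: "fst (gb_id A) = id"
  by (simp add: gb_id_def)

lemma snd_gb_id [simp]: "s \<in> A i \<Longrightarrow> snd (gb_id A) i s = s"
  by (simp add: gb_id_def)

lemma S_Gamma_simps [simp]:
  "carrier (S_Gamma A) = game_bijections A"
  "x \<otimes>\<^bsub>S_Gamma A\<^esub> y = gb_comp A x y"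
  "\<one>\<^bsub>S_Gamma A\<^esub> = gb_id A"
  by (simp_all add: S_Gamma_def)

lemma game_bijection_eqI:
  assumes "g \<in> game_bijections A" "h \<in> game_bijections A" "fst g = fst h"
    and "\<And>i s. s \<in> A i \<Longrightarrow> snd g i s = snd h i s"
  shows "g = h"
proof -
  have "snd g i s = snd h i s" for i s
    by (cases "s \<in> A i") (simp_all add: assms game_bijections_undefined[OF assms(1)] game_bijections_undefined[OF assms(2)])
  then show ?thesis using assms(3) by (simp add: prod_eq_iff fun_eq_iff)
qed

lemma gb_comp_closed:
  assumes "g \<in> game_bijections A" "h \<in> game_bijections A"
  shows "gb_comp A h g \<in> game_bijections A"
  unfolding mem_game_bijections
proof (intro conjI allI impI)
  show "bij (fst (gb_comp A h g))"
    using assms by (simp add: mem_game_bijections bij_comp)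
next
  fix i
  have "bij_betw (snd h (fst g i) \<circ> snd g i) (A i) (A (fst h (fst g i)))"
    using assms by (blast intro: bij_betw_trans game_bijections_bij_betw)
  then show "bij_betw (snd (gb_comp A h g) i) (A i) (A (fst (gb_comp A h g) i))"
    by (subst bij_betw_cong[where g = "snd h (fst g i) \<circ> snd g i"]) simp_all
next
  fix i s assume "s \<notin> A i"
  then show "snd (gb_comp A h g) i s = undefined" by (simp add: gb_comp_def)
qed

lemma gb_id_closed: "gb_id A \<in> game_bijections A"
  unfolding mem_game_bijections
proof (intro conjI allI impI)
  fix i
  show "bij_betw (snd (gb_id A) i) (A i) (A (fst (gb_id A) i))"
    by (subst bij_betw_cong[where g = id]) simp_all
qed (simp_all add: gb_id_def)

lemma gb_comp_assoc:
  assumes "g \<in> game_bijections A"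
  shows "gb_comp A (gb_comp A k h) g = gb_comp A k (gb_comp A h g)"
  using game_bijections_mem[OF assms] by (simp add: gb_comp_def fun_eq_iff)

lemma gb_id_left:
  assumes "g \<in> game_bijections A"
  shows "gb_comp A (gb_id A) g = g"
  by (rule game_bijection_eqI[OF gb_comp_closed[OF assms gb_id_closed] assms])
     (simp_all add: game_bijections_mem[OF assms])

lemma gb_left_inverse_exists:
  assumes g: "g \<in> game_bijections A"
  shows "\<exists>h\<in>game_bijections A. gb_comp A h g = gb_id A"
proof -
  define \<pi>' where "\<pi>' = inv_into UNIV (fst g)"
  define \<tau>' where "\<tau>' j b = (if b \<in> A j then inv_into (A (\<pi>' j)) (snd g (\<pi>' j)) b else undefined)" for j b
  have bij: "bij (fst g)" using g by (simp add: mem_game_bijections)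
  then have \<pi>'_left: "\<pi>' (fst g i) = i" and \<pi>'_right: "fst g (\<pi>' j) = j" for i j
    by (simp_all add: \<pi>'_def bij_is_inj bij_is_surj surj_f_inv_f)
  have "(\<pi>', \<tau>') \<in> game_bijections A"
    unfolding game_bijections_def
  proof (safe)
    show "bij \<pi>'" using bij by (simp add: \<pi>'_def bij_imp_bij_inv)
  next
    fix j
    have "bij_betw (inv_into (A (\<pi>' j)) (snd g (\<pi>' j))) (A j) (A (\<pi>' j))"
      using bij_betw_inv_into[OF game_bijections_bij_betw[OF g]] by (metis \<pi>'_right)
    then show "bij_betw (\<tau>' j) (A j) (A (\<pi>' j))"
      by (rule bij_betw_cong[THEN iffD1, rotated]) (simp add: \<tau>'_def)
  qed (simp add: \<tau>'_def)
  moreover have "gb_comp A (\<pi>', \<tau>') g = gb_id A"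
    by (rule game_bijection_eqI[OF gb_comp_closed[OF g calculation] gb_id_closed])
       (auto simp: \<pi>'_left \<tau>'_def game_bijections_mem[OF g]
          bij_betw_inv_into_left[OF game_bijections_bij_betw[OF g]])
  ultimately show ?thesis by blast
qed

lemma group_S_Gamma: "group (S_Gamma A)"
  by (rule groupI) (simp_all add: gb_comp_closed gb_id_closed gb_comp_assoc gb_id_left gb_left_inverse_exists)

definition matching_of_bijections :: "('p \<Rightarrow> 's \<Rightarrow> 's) \<Rightarrow> 's set \<Rightarrow> ('p \<Rightarrow> 's) set" where
  "matching_of_bijections T B = (\<lambda>b j. T j b) ` B"

lemma matching_of_bijections_unique:
  assumes bij: "\<And>j. bij_betw (T j) B (A j)"
    and "s \<in> matching_of_bijections T B" "t \<in> matching_of_bijections T B" "s j = t j"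
  shows "s = t"
proof -
  obtain b c where b: "b \<in> B" "s = (\<lambda>j. T j b)" and c: "c \<in> B" "t = (\<lambda>j. T j c)"
    using assms(2,3) by (auto simp: matching_of_bijections_def)
  have "b = c"
    using bij_betw_imp_inj_on[OF bij] b c assms(4) by (auto dest: inj_onD)
  then show ?thesis using b c by simp
qed

lemma matching_matching_of_bijections:
  assumes bij: "\<And>j. bij_betw (T j) B (A j)"
  shows "matching A (matching_of_bijections T B)"
  unfolding matching_def
proof (intro conjI allI ballI)
  show "matching_of_bijections T B \<subseteq> {s. \<forall>i. s i \<in> A i}"
    using bij_betw_apply[OF bij] by (auto simp: matching_of_bijections_def)
next
  fix i a assume "a \<in> A i"
  then obtain b where b: "b \<in> B" "T i b = a"
    using bij_betw_imp_surj_on[OF bij, of i] by (metis imageE)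
  show "\<exists>!s. s \<in> matching_of_bijections T B \<and> s i = a"
  proof (rule ex1I)
    show "(\<lambda>j. T j b) \<in> matching_of_bijections T B \<and> T i b = a"
      using b by (simp add: matching_of_bijections_def)
    then show "s = (\<lambda>j. T j b)" if "s \<in> matching_of_bijections T B \<and> s i = a" for s
      using that by (auto intro: matching_of_bijections_unique[OF bij])
  qed
qed

lemma match_map_matching_of_bijections:
  assumes bij: "\<And>j. bij_betw (T j) B (A j)" and b: "b \<in> B"
  shows "match_map A (matching_of_bijections T B) i j (T i b) = T j b"
proof -
  have profile: "(\<lambda>k. T k b) \<in> matching_of_bijections T B"
    using b by (simp add: matching_of_bijections_def)
  have "(THE c. \<exists>s\<in>matching_of_bijections T B. s i = T i b \<and> s j = c) = T j b"
  proof (rule the_equality)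
    show "\<exists>s\<in>matching_of_bijections T B. s i = T i b \<and> s j = T j b"
      using profile by auto
  next
    fix c assume "\<exists>s\<in>matching_of_bijections T B. s i = T i b \<and> s j = c"
    then obtain s where "s \<in> matching_of_bijections T B" "s i = T i b" "s j = c" by blast
    then show "c = T j b"
      using matching_of_bijections_unique[OF bij _ profile] by metis
  qed
  moreover have "T i b \<in> A i" by (rule bij_betw_apply[OF bij b])
  ultimately show ?thesis by (simp add: match_map_def)
qed

lemma match_map_self:
  assumes "matching A M" "a \<in> A i"
  shows "match_map A M i i a = a"
proof -
  obtain s where "s \<in> M" "s i = a" using assms unfolding matching_def by blast
  then have "(THE b. \<exists>s\<in>M. s i = a \<and> s i = b) = a" by (intro the_equality) auto
  then show ?thesis using assms(2) by (simp add: match_map_def)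
qed

lemma strategy_trivial_match_set:
  assumes "matching A M"
  shows "strategy_trivial A (match_set A M H)"
  using match_map_self[OF assms]
  by (auto simp: strategy_trivial_def match_set_def match_bij_def)

lemma subgroup_S_Gamma_subset:
  "subgroup G (S_Gamma A) \<Longrightarrow> g \<in> G \<Longrightarrow> g \<in> game_bijections A"
  using subgroup.mem_carrier by fastforce

lemma subgroup_S_Gamma_comp_closed:
  "subgroup G (S_Gamma A) \<Longrightarrow> h \<in> G \<Longrightarrow> g \<in> G \<Longrightarrow> gb_comp A h g \<in> G"
  using subgroup.m_closed by fastforce

lemma player_transitiveD: "player_transitive G \<Longrightarrow> \<exists>g\<in>G. fst g i = j"
  by (auto simp: player_transitive_def player_perms_def)

lemma strategy_trivial_snd_eq:
  assumes sg: "subgroup G (S_Gamma A)" and st: "strategy_trivial A G"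
    and g: "g \<in> G" and h: "h \<in> G" and gh: "fst g i = fst h i" and a: "a \<in> A i"
  shows "snd g i a = snd h i a"
proof -
  interpret S_Gamma: group "S_Gamma A" by (rule group_S_Gamma)
  define h' where "h' = inv\<^bsub>S_Gamma A\<^esub> h"
  have h': "h' \<in> G" unfolding h'_def by (rule subgroup.m_inv_closed[OF sg h])
  have "h \<in> carrier (S_Gamma A)" using subgroup_S_Gamma_subset[OF sg h] by simp
  from S_Gamma.l_inv[OF this] have h'h: "gb_comp A h' h = gb_id A" by (simp add: h'_def)
  let ?j = "fst h i"
  have undo: "snd h' ?j (snd k i a) = a" if k: "k \<in> G" "fst k i = ?j" for k
  proof -
    have "fst (gb_comp A h' k) i = i"
      using k(2) arg_cong[OF h'h, of "\<lambda>x. fst x i"] by simp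
    then have "snd (gb_comp A h' k) i a = a"
      using st subgroup_S_Gamma_comp_closed[OF sg h' k(1)] a by (auto simp: strategy_trivial_def)
    then show ?thesis using a k(2) by simp
  qed
  have "inj_on (snd h' ?j) (A ?j)"
    using game_bijections_bij_betw[OF subgroup_S_Gamma_subset[OF sg h']] by (rule bij_betw_imp_inj_on)
  moreover have "snd g i a \<in> A ?j" "snd h i a \<in> A ?j"
    using game_bijections_mem[OF subgroup_S_Gamma_subset[OF sg g] a]
      game_bijections_mem[OF subgroup_S_Gamma_subset[OF sg h] a] gh by simp_all
  ultimately show ?thesis using undo[OF g gh] undo[OF h refl] by (metis inj_onD)
qed

definition strategy_transfer :: "('p, 's) game_bij set \<Rightarrow> 'p \<Rightarrow> 'p \<Rightarrow> 's \<Rightarrow> 's" where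
  "strategy_transfer G i j = snd (SOME g. g \<in> G \<and> fst g i = j) i"

lemma strategy_transfer_eq:
  assumes sg: "subgroup G (S_Gamma A)" and st: "strategy_trivial A G"
    and g: "g \<in> G" and a: "a \<in> A i"
  shows "strategy_transfer G i (fst g i) a = snd g i a"
proof -
  let ?g = "SOME h. h \<in> G \<and> fst h i = fst g i"
  have "?g \<in> G \<and> fst ?g i = fst g i" by (rule someI[of _ g]) (simp add: g)
  then show ?thesis
    unfolding strategy_transfer_def using strategy_trivial_snd_eq[OF sg st _ g _ a] by blast
qed

lemma bij_betw_strategy_transfer:
  assumes sg: "subgroup G (S_Gamma A)" and st: "strategy_trivial A G"
    and tr: "player_transitive G"
  shows "bij_betw (strategy_transfer G i j) (A i) (A j)"
proof -
  obtain g where g: "g \<in> G" "fst g i = j" using player_transitiveD[OF tr] by blast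
  have "strategy_transfer G i j a = snd g i a" if "a \<in> A i" for a
    using strategy_transfer_eq[OF sg st g(1) that] g(2) by simp
  moreover have "bij_betw (snd g i) (A i) (A j)"
    using game_bijections_bij_betw[OF subgroup_S_Gamma_subset[OF sg g(1)], of i] g(2) by simp
  ultimately show ?thesis by (rule iffD2[OF bij_betw_cong])
qed

lemma snd_strategy_transfer:
  assumes sg: "subgroup G (S_Gamma A)" and st: "strategy_trivial A G"
    and tr: "player_transitive G" and g: "g \<in> G" and a: "a \<in> A i"
  shows "snd g j (strategy_transfer G i j a) = strategy_transfer G i (fst g j) a"
proof -
  obtain h where h: "h \<in> G" "fst h i = j" using player_transitiveD[OF tr] by blast
  have gh: "gb_comp A g h \<in> G" by (rule subgroup_S_Gamma_comp_closed[OF sg g h(1)])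
  have "snd g j (strategy_transfer G i j a) = snd (gb_comp A g h) i a"
    using strategy_transfer_eq[OF sg st h(1) a] h(2) a by simp
  also have "\<dots> = strategy_transfer G i (fst g j) a"
    using strategy_transfer_eq[OF sg st gh a] h(2) by simp
  finally show ?thesis .
qed

lemma match_set_strategy_transfer:
  assumes sg: "subgroup G (S_Gamma A)" and st: "strategy_trivial A G"
    and tr: "player_transitive G"
  shows "match_set A (matching_of_bijections (strategy_transfer G i) (A i)) (player_perms G) = G"
proof -
  let ?M = "matching_of_bijections (strategy_transfer G i) (A i)"
  note bij = bij_betw_strategy_transfer[OF sg st tr, of i]
  have "match_bij A ?M (fst g) = g" if g: "g \<in> G" for g
  proof -
    have "match_map A ?M j (fst g j) s = snd g j s" for j s
    proof (cases "s \<in> A j")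
      case True
      then obtain a where a: "a \<in> A i" "s = strategy_transfer G i j a"
        using bij_betw_imp_surj_on[OF bij, of j] by (metis imageE)
      then show ?thesis
        using match_map_matching_of_bijections[OF bij a(1)] snd_strategy_transfer[OF sg st tr g a(1)]
        by simp
    next
      case False
      then show ?thesis
        using game_bijections_undefined[OF subgroup_S_Gamma_subset[OF sg g]] by (simp add: match_map_def)
    qed
    then have "snd (match_bij A ?M (fst g)) = snd g" by (simp add: match_bij_def fun_eq_iff)
    then show ?thesis by (simp add: match_bij_def prod_eq_iff)
  qed
  then have "(\<lambda>g. match_bij A ?M (fst g)) ` G = G" by simp
  then show ?thesis by (simp add: match_set_def player_perms_def image_image)
qed

theorem theorem4p23:
  fixes A :: "'p::finite \<Rightarrow> 's set"
    and u :: "'p \<Rightarrow> ('p \<Rightarrow> 's) \<Rightarrow> real"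
    and G :: "('p, 's) game_bij set"
  assumes "\<And>i. finite (A i)" and "\<And>i. A i \<noteq> {}"
    and "subgroup G (S_Gamma A)"
    and "player_transitive G"
  shows "(\<exists>M. matching A M \<and> match_set A M (player_perms G) = G) \<longleftrightarrow> strategy_trivial A G"
proof
  assume "\<exists>M. matching A M \<and> match_set A M (player_perms G) = G"
  then obtain M where "matching A M" and "match_set A M (player_perms G) = G" by blast
  then show "strategy_trivial A G" using strategy_trivial_match_set[of A M "player_perms G"] by simp
next
  assume st: "strategy_trivial A G"
  fix i
  let ?M = "matching_of_bijections (strategy_transfer G i) (A i)"
  have "matching A ?M"
    by (rule matching_matching_of_bijections[OF bij_betw_strategy_transfer[OF assms(3) st assms(4)]])
  moreover have "match_set A ?M (player_perms G) = G"
    by (rule match_set_strategy_transfer[OF assms(3) st assms(4)])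
  ultimately show "\<exists>M. matching A M \<and> match_set A M (player_perms G) = G" by blast
qed

end
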